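(* With the notation of the context, let $\iota:G\rtimes M_G\to \mathrm{GL}(V)$ be a finite-dimensional complex representation, extended to an algebra morphism $\iota:\mathbb{Z}[G\rtimes M_G]\to\mathrm{End}(V)$, and define $\widetilde{\rho_V}:\mathcal{G}\to \mathrm{GL}(V^{\oplus N})$ by applying $\iota$ entrywise to the matrix $\widetilde{\rho_G}(g)$. Then $\widetilde{\rho_V}$ is a $\mathbb{C}$-linear representation of $\mathcal{G}$. Moreover: (i) if $\iota(m)\notin\iota(\mathbb{Z}[G])$ for every $m\neq 1$ in $M_G$, then $\mathrm{Ker}(\widetilde{\rho_V})$ is a subgroup of $K_G$; (ii) if furthermore the restriction $\iota:\mathbb{Z}[G]\to\mathrm{End}(V)$ is injective, then $\mathrm{Ker}(\widetilde{\rho_V})=\mathrm{Ker}(\widetilde{\rho_G})$.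
   Context: Setting: $\mathcal{G}$ is a group isotopically acting on a based manifold $(X,x)$ (a homomorphism to the group of homeomorphisms fixing $x$ modulo isotopies fixing $x$); $N\triangleleft\pi_1(X,x)$ is $\mathcal{G}$-stable, $G=\pi_1(X,x)/N$, $X_G$ the associated regular cover, $M_G$ and $K_G$ the image and kernel of the induced map $\mathcal{G}\to\mathrm{Aut}(G)$, $f\mapsto f_*$. Each $f$ lifts to $f_G$ acting on $H_*(X_G,\mathbb{Z})$ with $f_G(g\cdot v)=f_*(g)f_G(v)$. Assume $H_*(X_G,\mathbb{Z})$ is a free $\mathbb{Z}[G]$-module with basis $\mathcal{B}=\{e_1,\dots,e_N\}$; $\mathrm{Mat}_{\mathcal{B}}(f)$ has $(i,j)$ entry $a_{ij}^*$ where $a_{ij}$ is the coefficient of $e_i$ in $f(e_j)$ and $*$ is the anti-involution $g\mapsto g^{-1}$. The representation $\widetilde{\rho_G}:\mathcal{G}\to\mathrm{GL}_N(\mathbb{Z}[G\rtimes M_G])$ is $\widetilde{\rho_G}(f)=\mathrm{Mat}_{\mathcal{B}}(f_G)(f_*I_N)$, with $f_*I_N$ the scalar diagonal matrix with entries $f_*\in M_G$; $\rho_G$ is its restriction to $K_G$, valued in $\mathrm{GL}_N(\mathbb{Z}[G])$. *)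

theory Defs
  imports "HOL-Algebra.Group" "HOL-Algebra.Coset" "HOL-Algebra.Bij" "Jordan_Normal_Form.Matrix"
begin

text \<open>Elements are pairs (g, m) with g in G and m in M (an automorphism of G,
  represented as an extensional function on carrier G). An element g of G is identified with (g, id),
  an element m of M with (1, m).\<close>

definition sdprod :: "('a, 'b) monoid_scheme \<Rightarrow> ('a \<Rightarrow> 'a) set \<Rightarrow> ('a \<times> ('a \<Rightarrow> 'a)) monoid" where
  "sdprod G M =
    \<lparr>carrier = carrier G \<times> M,
     Group.monoid.mult = (\<lambda>(g, m) (g', m'). (g \<otimes>\<^bsub>G\<^esub> m g', compose (carrier G) m m')),
     Group.monoid.one = (\<one>\<^bsub>G\<^esub>, (\<lambda>x\<in>carrier G. x))\<rparr>"

text \<open>Elements of Z[H]: finitely supported functions carrier H \<rightarrow> int (zero outside carrier H).\<close>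

definition gr_supp :: "('h, 'b) monoid_scheme \<Rightarrow> ('h \<Rightarrow> int) \<Rightarrow> 'h set" where
  "gr_supp H a = {h \<in> carrier H. a h \<noteq> 0}"

definition gr_elem :: "('h, 'b) monoid_scheme \<Rightarrow> ('h \<Rightarrow> int) \<Rightarrow> bool" where
  "gr_elem H a \<longleftrightarrow> finite (gr_supp H a) \<and> (\<forall>h. h \<notin> carrier H \<longrightarrow> a h = 0)"

definition gr_mult :: "('h, 'b) monoid_scheme \<Rightarrow> ('h \<Rightarrow> int) \<Rightarrow> ('h \<Rightarrow> int) \<Rightarrow> ('h \<Rightarrow> int)" where
  "gr_mult H a b = (\<lambda>h. if h \<in> carrier H
      then (\<Sum>k\<in>gr_supp H a. a k * b (inv\<^bsub>H\<^esub> k \<otimes>\<^bsub>H\<^esub> h)) else 0)"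

definition gr_delta :: "('h, 'b) monoid_scheme \<Rightarrow> 'h \<Rightarrow> ('h \<Rightarrow> int)" where
  "gr_delta H x = (\<lambda>h. if h = x then 1 else 0)"

section \<open>N x N matrices over Z[H] (indices 0..N-1, zero outside)\<close>

type_synonym 'h grmat = "nat \<Rightarrow> nat \<Rightarrow> ('h \<Rightarrow> int)"

definition gr_mat_mult :: "('h, 'b) monoid_scheme \<Rightarrow> nat \<Rightarrow> 'h grmat \<Rightarrow> 'h grmat \<Rightarrow> 'h grmat" where
  "gr_mat_mult H N A B = (\<lambda>i j. if i < N \<and> j < N
      then (\<lambda>h. \<Sum>k<N. gr_mult H (A i k) (B k j) h) else (\<lambda>_. 0))"

definition gr_mat_one :: "('h, 'b) monoid_scheme \<Rightarrow> nat \<Rightarrow> 'h grmat" where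
  "gr_mat_one H N = (\<lambda>i j. if i < N \<and> j < N \<and> i = j then gr_delta H \<one>\<^bsub>H\<^esub> else (\<lambda>_. 0))"

text \<open>rhoGt: f \<mapsto> Mat(f_G) \<cdot> (f_* I_N), where f_* I_N is the scalar matrix with
  entries the group-ring element [(1, f_*)] of Z[G \<rtimes> M_G].\<close>
definition rhoGt ::
  "('a, 'b) monoid_scheme \<Rightarrow> ('a \<times> ('a \<Rightarrow> 'a)) monoid \<Rightarrow> nat \<Rightarrow> ('g \<Rightarrow> 'a \<Rightarrow> 'a)
   \<Rightarrow> ('g \<Rightarrow> ('a \<times> ('a \<Rightarrow> 'a)) grmat) \<Rightarrow> 'g \<Rightarrow> ('a \<times> ('a \<Rightarrow> 'a)) grmat" where
  "rhoGt G H N phi Mat f = (\<lambda>i j. if i < N \<and> j < N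
      then gr_mult H (Mat f i j) (gr_delta H (\<one>\<^bsub>G\<^esub>, phi f)) else (\<lambda>_. 0))"

definition iota_ext :: "('h, 'b) monoid_scheme \<Rightarrow> nat \<Rightarrow> ('h \<Rightarrow> complex mat) \<Rightarrow> ('h \<Rightarrow> int) \<Rightarrow> complex mat" where
  "iota_ext H d \<iota> a = mat d d (\<lambda>(r, c). \<Sum>h\<in>gr_supp H a. of_int (a h) * (\<iota> h $$ (r, c)))"

text \<open>Entrywise application of iota to an N x N matrix over Z[H], giving an
  endomorphism of V^N (V = C^d), as an (N d) x (N d) block matrix.\<close>
definition iota_block :: "('h, 'b) monoid_scheme \<Rightarrow> nat \<Rightarrow> nat \<Rightarrow> ('h \<Rightarrow> complex mat) \<Rightarrow> 'h grmat \<Rightarrow> complex mat" where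
  "iota_block H N d \<iota> A = mat (N * d) (N * d)
      (\<lambda>(r, c). iota_ext H d \<iota> (A (r div d) (c div d)) $$ (r mod d, c mod d))"

end

theory Submission
  imports Defs
begin

(* Applying \<iota> entrywise is multiplicative because \<iota> extends to a ring homomorphism
   Z[G \<rtimes> M_G] \<rightarrow> End(V) (convolution goes to the matrix product) and block matrices multiply
   blockwise, so rho_V is a representation.  If rho_V(f) = 1, its (0,0) block reads
   \<iota>(a) \<iota>(1, phi f) = 1 with a \<in> Z[G], i.e. \<iota>(a) = \<iota>(1, (phi f)^-1); the separation hypothesis
   forces phi f = 1, so f \<in> K_G.  Then rho_G(f) = Mat(f) has entries in Z[G], and injectivity of
   \<iota> on Z[G] turns rho_V(f) = 1 into rho_G(f) = 1 block by block. *)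

lemma carrier_AutoGroup: "carrier (AutoGroup G) = auto G"
  by (simp add: AutoGroup_def BijGroup_def)

lemma one_AutoGroup: "\<one>\<^bsub>AutoGroup G\<^esub> = (\<lambda>x\<in>carrier G. x)"
  by (simp add: AutoGroup_def BijGroup_def)

lemma mult_AutoGroup:
  "m \<in> auto G \<Longrightarrow> m' \<in> auto G \<Longrightarrow> m \<otimes>\<^bsub>AutoGroup G\<^esub> m' = compose (carrier G) m m'"
  by (simp add: AutoGroup_def BijGroup_def auto_def)

lemma carrier_sdprod: "carrier (sdprod G M) = carrier G \<times> M"
  by (simp add: sdprod_def)

lemma one_sdprod: "\<one>\<^bsub>sdprod G M\<^esub> = (\<one>\<^bsub>G\<^esub>, \<one>\<^bsub>AutoGroup G\<^esub>)"
  by (simp add: sdprod_def one_AutoGroup)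

lemma mult_sdprod:
  "(g, m) \<otimes>\<^bsub>sdprod G M\<^esub> (g', m') = (g \<otimes>\<^bsub>G\<^esub> m g', compose (carrier G) m m')"
  by (simp add: sdprod_def)

lemma (in group) subgroup_AutoGroup_hom:
  "subgroup M (AutoGroup G) \<Longrightarrow> m \<in> M \<Longrightarrow> m \<in> hom G G"
  using subgroup.subset by (fastforce simp: carrier_AutoGroup auto_def)

lemma (in group) compose_eq_AutoGroup_mult:
  "subgroup M (AutoGroup G) \<Longrightarrow> m \<in> M \<Longrightarrow> m' \<in> M \<Longrightarrow>
    compose (carrier G) m m' = m \<otimes>\<^bsub>AutoGroup G\<^esub> m'"
  using subgroup.subset by (metis carrier_AutoGroup mult_AutoGroup subsetD)

lemma (in group) sdprod_l_inv:
  assumes M: "subgroup M (AutoGroup G)" and g: "g \<in> carrier G" and m: "m \<in> M"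
  shows "((inv\<^bsub>AutoGroup G\<^esub> m) (inv g), inv\<^bsub>AutoGroup G\<^esub> m) \<otimes>\<^bsub>sdprod G M\<^esub> (g, m) = \<one>\<^bsub>sdprod G M\<^esub>"
proof -
  interpret Aut: group "AutoGroup G" by (rule AutoGroup)
  define m' where "m' = inv\<^bsub>AutoGroup G\<^esub> m"
  have m': "m' \<in> M"
    unfolding m'_def using m by (rule subgroup.m_inv_closed[OF M])
  then have "m' (inv g) \<otimes> m' g = \<one>"
    using g by (simp flip: hom_mult[OF subgroup_AutoGroup_hom[OF M]]
        add: hom_one[OF subgroup_AutoGroup_hom[OF M] is_group is_group])
  moreover have "compose (carrier G) m' m = \<one>\<^bsub>AutoGroup G\<^esub>"
    using m m' by (simp add: compose_eq_AutoGroup_mult[OF M] m'_def subgroup.mem_carrier[OF M])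
  ultimately show ?thesis
    by (simp add: mult_sdprod one_sdprod m'_def)
qed

lemma (in group) sdprod_group:
  assumes M: "subgroup M (AutoGroup G)"
  shows "group (sdprod G M)"
proof -
  interpret Aut: group "AutoGroup G" by (rule AutoGroup)
  note M_hom = subgroup_AutoGroup_hom[OF M] and compose_M = compose_eq_AutoGroup_mult[OF M]
  note M_closed = subgroup.m_closed[OF M] subgroup.one_closed[OF M] subgroup.mem_carrier[OF M]
  show ?thesis
  proof (rule groupI)
    fix x y
    assume "x \<in> carrier (sdprod G M)" "y \<in> carrier (sdprod G M)"
    then show "x \<otimes>\<^bsub>sdprod G M\<^esub> y \<in> carrier (sdprod G M)"
      by (auto simp: carrier_sdprod mult_sdprod compose_M M_closed hom_in_carrier[OF M_hom])
  next
    show "\<one>\<^bsub>sdprod G M\<^esub> \<in> carrier (sdprod G M)"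
      by (simp add: one_sdprod carrier_sdprod M_closed)
  next
    fix x y z
    assume "x \<in> carrier (sdprod G M)" "y \<in> carrier (sdprod G M)" "z \<in> carrier (sdprod G M)"
    then obtain g m g' m' g'' m'' where xyz: "x = (g, m)" "y = (g', m')" "z = (g'', m'')"
      and g: "g \<in> carrier G" "g' \<in> carrier G" "g'' \<in> carrier G"
      and m: "m \<in> M" "m' \<in> M" "m'' \<in> M"
      by (auto simp: carrier_sdprod)
    have "compose (carrier G) (compose (carrier G) m m') m'' = compose (carrier G) m (compose (carrier G) m' m'')"
      using m by (simp add: compose_M M_closed Aut.m_assoc)
    then show "x \<otimes>\<^bsub>sdprod G M\<^esub> y \<otimes>\<^bsub>sdprod G M\<^esub> z = x \<otimes>\<^bsub>sdprod G M\<^esub> (y \<otimes>\<^bsub>sdprod G M\<^esub> z)"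
      using g m by (simp add: xyz mult_sdprod compose_eq hom_mult[OF M_hom] hom_in_carrier[OF M_hom] m_assoc)
  next
    fix x
    assume "x \<in> carrier (sdprod G M)"
    then obtain g m where x: "x = (g, m)" "g \<in> carrier G" "m \<in> M"
      by (auto simp: carrier_sdprod)
    have "compose (carrier G) \<one>\<^bsub>AutoGroup G\<^esub> m = m"
      using x by (simp add: compose_M M_closed)
    then show "\<one>\<^bsub>sdprod G M\<^esub> \<otimes>\<^bsub>sdprod G M\<^esub> x = x"
      using x by (simp add: one_sdprod mult_sdprod one_AutoGroup)
  next
    fix x
    assume "x \<in> carrier (sdprod G M)"
    then obtain g m where x: "x = (g, m)" "g \<in> carrier G" "m \<in> M"
      by (auto simp: carrier_sdprod)
    then show "\<exists>y\<in>carrier (sdprod G M). y \<otimes>\<^bsub>sdprod G M\<^esub> x = \<one>\<^bsub>sdprod G M\<^esub>"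
      using sdprod_l_inv[OF M x(2,3)] subgroup.m_inv_closed[OF M x(3)]
      by (auto simp: carrier_sdprod hom_in_carrier[OF M_hom])
  qed
qed

lemma (in group) sdprod_inv_aut:
  assumes M: "subgroup M (AutoGroup G)" and m: "m \<in> M"
  shows "inv\<^bsub>sdprod G M\<^esub> (\<one>, m) = (\<one>, inv\<^bsub>AutoGroup G\<^esub> m)"
proof -
  interpret Aut: group "AutoGroup G" by (rule AutoGroup)
  interpret S: group "sdprod G M" by (rule sdprod_group[OF M])
  have m': "inv\<^bsub>AutoGroup G\<^esub> m \<in> M"
    using m by (rule subgroup.m_inv_closed[OF M])
  have "(\<one>, inv\<^bsub>AutoGroup G\<^esub> m) \<otimes>\<^bsub>sdprod G M\<^esub> (\<one>, m) = \<one>\<^bsub>sdprod G M\<^esub>"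
    using m m' subgroup.mem_carrier[OF M]
    by (simp add: mult_sdprod one_sdprod hom_one[OF _ is_group is_group] carrier_AutoGroup auto_def
        flip: mult_AutoGroup)
  then show ?thesis
    using m m' by (intro S.inv_equality) (simp_all add: carrier_sdprod)
qed

lemma gr_supp_delta: "x \<in> carrier H \<Longrightarrow> gr_supp H (gr_delta H x) = {x}"
  by (auto simp: gr_supp_def gr_delta_def)

lemma gr_elem_delta: "x \<in> carrier H \<Longrightarrow> gr_elem H (gr_delta H x)"
  unfolding gr_elem_def by (simp add: gr_supp_delta) (simp add: gr_delta_def)

lemma gr_elem_zero: "gr_elem H (\<lambda>_. 0)"
  by (simp add: gr_elem_def gr_supp_def)

lemma gr_elem_sum:
  assumes K: "finite K" and a: "\<And>k. k \<in> K \<Longrightarrow> gr_elem H (a k)"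
  shows "gr_elem H (\<lambda>h. \<Sum>k\<in>K. a k h)"
proof -
  have "gr_supp H (\<lambda>h. \<Sum>k\<in>K. a k h) \<subseteq> (\<Union>k\<in>K. gr_supp H (a k))"
    by (auto simp: gr_supp_def intro: sum.not_neutral_contains_not_neutral)
  moreover have "finite (\<Union>k\<in>K. gr_supp H (a k))"
    using K a by (simp add: gr_elem_def)
  ultimately show ?thesis
    using a by (auto simp: gr_elem_def intro: finite_subset)
qed

lemma (in group) gr_supp_mult_subset:
  "gr_supp G (gr_mult G a b) \<subseteq> (\<lambda>(k, h). k \<otimes> h) ` (gr_supp G a \<times> gr_supp G b)"
proof
  fix h
  assume "h \<in> gr_supp G (gr_mult G a b)"
  then have h: "h \<in> carrier G" and "(\<Sum>k\<in>gr_supp G a. a k * b (inv k \<otimes> h)) \<noteq> 0"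
    by (auto simp: gr_supp_def gr_mult_def)
  then obtain k where k: "k \<in> gr_supp G a" "a k * b (inv k \<otimes> h) \<noteq> 0"
    by (meson sum.not_neutral_contains_not_neutral)
  then have "k \<in> carrier G" "inv k \<otimes> h \<in> gr_supp G b"
    using h by (auto simp: gr_supp_def)
  moreover have "h = k \<otimes> (inv k \<otimes> h)"
    using \<open>k \<in> carrier G\<close> h by (simp add: m_assoc [symmetric])
  ultimately show "h \<in> (\<lambda>(k, h). k \<otimes> h) ` (gr_supp G a \<times> gr_supp G b)"
    using k(1) by force
qed

lemma (in group) gr_elem_mult:
  assumes "gr_elem G a" "gr_elem G b"
  shows "gr_elem G (gr_mult G a b)"
  using finite_subset[OF gr_supp_mult_subset] assms
  by (auto simp: gr_elem_def gr_mult_def)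

lemma (in group) gr_mult_delta_one:
  assumes a: "gr_elem G a"
  shows "gr_mult G a (gr_delta G \<one>) = a"
proof
  fix h
  show "gr_mult G a (gr_delta G \<one>) h = a h"
  proof (cases "h \<in> carrier G")
    case True
    have "inv k \<otimes> h = \<one> \<longleftrightarrow> k = h" if "k \<in> carrier G" for k
      using that True by (metis inv_closed inv_inv l_inv inv_equality)
    then have "gr_mult G a (gr_delta G \<one>) h = (\<Sum>k\<in>gr_supp G a. if k = h then a k else 0)"
      using True by (auto simp: gr_mult_def gr_delta_def gr_supp_def intro!: sum.cong)
    also have "\<dots> = a h"
      using True a by (auto simp: gr_elem_def gr_supp_def)
    finally show ?thesis .
  qed (use a in \<open>simp add: gr_mult_def gr_elem_def\<close>)
qed

lemma (in group) sum_left_translate: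
  fixes w F :: "'a \<Rightarrow> 'r :: comm_semiring_0"
  assumes k: "k \<in> carrier G" and T: "finite T" "T \<subseteq> carrier G" "(\<otimes>) k ` B \<subseteq> T"
    and B: "B \<subseteq> carrier G" "\<And>h. h \<in> carrier G - B \<Longrightarrow> w h = 0"
  shows "(\<Sum>h\<in>T. w (inv k \<otimes> h) * F h) = (\<Sum>h\<in>B. w h * F (k \<otimes> h))"
proof -
  have "(\<Sum>h\<in>T. w (inv k \<otimes> h) * F h) = (\<Sum>h\<in>(\<otimes>) k ` B. w (inv k \<otimes> h) * F h)"
  proof (rule sum.mono_neutral_right[OF T(1,3)], intro ballI)
    fix h
    assume h: "h \<in> T - (\<otimes>) k ` B"
    then have "h \<in> carrier G" "h = k \<otimes> (inv k \<otimes> h)"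
      using k T(2) by (auto simp: m_assoc [symmetric])
    then have "inv k \<otimes> h \<in> carrier G - B"
      using h k by (metis DiffE DiffI image_eqI inv_closed m_closed)
    then show "w (inv k \<otimes> h) * F h = 0"
      by (simp add: B(2))
  qed
  also have "\<dots> = (\<Sum>h\<in>B. w h * F (k \<otimes> h))"
    using k B(1) by (subst sum.reindex) (auto simp: inj_on_def m_assoc [symmetric] subset_iff)
  finally show ?thesis .
qed

lemma (in group) sum_gr_mult:
  fixes F :: "'a \<Rightarrow> 'r :: comm_ring_1"
  assumes b: "gr_elem G b"
    and T: "finite T" "T \<subseteq> carrier G" "(\<lambda>(k, h). k \<otimes> h) ` (gr_supp G a \<times> gr_supp G b) \<subseteq> T"
  shows "(\<Sum>h\<in>T. of_int (gr_mult G a b h) * F h)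
    = (\<Sum>k\<in>gr_supp G a. \<Sum>h\<in>gr_supp G b. of_int (a k) * of_int (b h) * F (k \<otimes> h))"
proof -
  have "(\<Sum>h\<in>T. of_int (gr_mult G a b h) * F h)
      = (\<Sum>h\<in>T. \<Sum>k\<in>gr_supp G a. of_int (a k) * (of_int (b (inv k \<otimes> h)) * F h))"
    using T(2) by (intro sum.cong refl) (auto simp: gr_mult_def sum_distrib_right mult.assoc)
  also have "\<dots> = (\<Sum>k\<in>gr_supp G a. of_int (a k) * (\<Sum>h\<in>T. of_int (b (inv k \<otimes> h)) * F h))"
    by (subst sum.swap) (simp add: sum_distrib_left)
  also have "\<dots> = (\<Sum>k\<in>gr_supp G a. of_int (a k) * (\<Sum>h\<in>gr_supp G b. of_int (b h) * F (k \<otimes> h)))"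
  proof (rule sum.cong[OF refl])
    fix k
    assume "k \<in> gr_supp G a"
    then have "(\<Sum>h\<in>T. of_int (b (inv k \<otimes> h)) * F h) = (\<Sum>h\<in>gr_supp G b. of_int (b h) * F (k \<otimes> h))"
      using b T by (intro sum_left_translate[where w = "\<lambda>h. of_int (b h)"])
        (auto simp: gr_supp_def gr_elem_def)
    then show "of_int (a k) * (\<Sum>h\<in>T. of_int (b (inv k \<otimes> h)) * F h)
        = of_int (a k) * (\<Sum>h\<in>gr_supp G b. of_int (b h) * F (k \<otimes> h))"
      by simp
  qed
  finally show ?thesis
    by (simp add: sum_distrib_left mult.assoc)
qed

lemma iota_ext_carrier: "iota_ext H d \<iota> a \<in> carrier_mat d d"
  by (simp add: iota_ext_def)

lemma index_iota_ext:
  assumes "gr_elem H a" "finite T" "gr_supp H a \<subseteq> T" "r < d" "c < d"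
  shows "iota_ext H d \<iota> a $$ (r, c) = (\<Sum>h\<in>T. of_int (a h) * \<iota> h $$ (r, c))"
proof -
  have "(\<Sum>h\<in>gr_supp H a. of_int (a h) * \<iota> h $$ (r, c)) = (\<Sum>h\<in>T. of_int (a h) * \<iota> h $$ (r, c))"
    using assms(1-3) by (intro sum.mono_neutral_left) (auto simp: gr_elem_def gr_supp_def)
  then show ?thesis
    using assms(4,5) by (simp add: iota_ext_def)
qed

lemma iota_ext_zero: "iota_ext H d \<iota> (\<lambda>_. 0) = 0\<^sub>m d d"
  by (auto simp: iota_ext_def gr_supp_def)

lemma iota_ext_delta:
  "x \<in> carrier H \<Longrightarrow> \<iota> x \<in> carrier_mat d d \<Longrightarrow> iota_ext H d \<iota> (gr_delta H x) = \<iota> x"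
  by (rule eq_matI) (simp_all add: iota_ext_def gr_supp_delta, auto simp: gr_delta_def)

lemma index_iota_ext_sum:
  assumes K: "finite K" and a: "\<And>k. k \<in> K \<Longrightarrow> gr_elem H (a k)" and rc: "r < d" "c < d"
  shows "iota_ext H d \<iota> (\<lambda>h. \<Sum>k\<in>K. a k h) $$ (r, c) = (\<Sum>k\<in>K. iota_ext H d \<iota> (a k) $$ (r, c))"
proof -
  define T where "T = (\<Union>k\<in>K. gr_supp H (a k))"
  have T: "finite T" "\<And>k. k \<in> K \<Longrightarrow> gr_supp H (a k) \<subseteq> T"
    using K a by (auto simp: T_def gr_elem_def)
  have "gr_supp H (\<lambda>h. \<Sum>k\<in>K. a k h) \<subseteq> T"
    by (auto simp: T_def gr_supp_def intro: sum.not_neutral_contains_not_neutral)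
  then show ?thesis
    using K a T rc
    by (simp add: index_iota_ext[where T = T] gr_elem_sum sum_distrib_right sum.swap[of _ T])
qed

lemma index_mult_mat_sum:
  "A \<in> carrier_mat n m \<Longrightarrow> B \<in> carrier_mat m p \<Longrightarrow> i < n \<Longrightarrow> j < p \<Longrightarrow>
    (A * B) $$ (i, j) = (\<Sum>t<m. A $$ (i, t) * B $$ (t, j))"
  by (auto simp: scalar_prod_def atLeast0LessThan intro!: sum.cong)

lemma invertible_matI:
  "A \<in> carrier_mat n n \<Longrightarrow> B \<in> carrier_mat n n \<Longrightarrow> A * B = 1\<^sub>m n \<Longrightarrow> B * A = 1\<^sub>m n \<Longrightarrow>
    invertible_mat A"
  unfolding invertible_mat_def inverts_mat_def by auto

lemma mult_add_less_mult:
  fixes k t N d :: nat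
  assumes "k < N" "t < d"
  shows "k * d + t < N * d"
proof -
  have "k * d + t < Suc k * d"
    using assms(2) by simp
  also have "\<dots> \<le> N * d"
    using assms(1) by (intro mult_le_mono1) simp
  finally show ?thesis .
qed

lemma sum_lessThan_mult_div_mod:
  fixes f :: "nat \<Rightarrow> nat \<Rightarrow> 'c :: comm_monoid_add"
  shows "(\<Sum>s<N * d. f (s div d) (s mod d)) = (\<Sum>k<N. \<Sum>t<d. f k t)"
proof (cases "d = 0")
  case False
  have "(\<Sum>s<N * d. f (s div d) (s mod d)) = (\<Sum>(k, t)\<in>{..<N} \<times> {..<d}. f k t)"
    by (rule sum.reindex_bij_witness[where i = "\<lambda>(k, t). k * d + t" and j = "\<lambda>s. (s div d, s mod d)"])
      (use False in \<open>auto simp: less_mult_imp_div_less mult_add_less_mult\<close>)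
  then show ?thesis
    by (simp add: sum.cartesian_product)
qed simp

lemma index_iota_block:
  "i < N \<Longrightarrow> j < N \<Longrightarrow> r < d \<Longrightarrow> c < d \<Longrightarrow>
    iota_block H N d \<iota> A $$ (i * d + r, j * d + c) = iota_ext H d \<iota> (A i j) $$ (r, c)"
  by (simp add: iota_block_def mult_add_less_mult)

lemma iota_block_eqD:
  assumes "iota_block H N d \<iota> A = iota_block H N d \<iota> B" "i < N" "j < N"
  shows "iota_ext H d \<iota> (A i j) = iota_ext H d \<iota> (B i j)"
proof (rule eq_matI)
  fix r c
  assume "r < dim_row (iota_ext H d \<iota> (B i j))" "c < dim_col (iota_ext H d \<iota> (B i j))"
  then have "r < d" "c < d"
    by (simp_all add: iota_ext_def)
  then show "iota_ext H d \<iota> (A i j) $$ (r, c) = iota_ext H d \<iota> (B i j) $$ (r, c)"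
    using assms by (metis index_iota_block)
qed (simp_all add: iota_ext_def)

locale mat_rep = group H for H :: "('h, 'b) monoid_scheme" (structure) +
  fixes d :: nat and \<iota> :: "'h \<Rightarrow> complex mat"
  assumes rep_carrier: "x \<in> carrier H \<Longrightarrow> \<iota> x \<in> carrier_mat d d"
    and rep_mult: "x \<in> carrier H \<Longrightarrow> y \<in> carrier H \<Longrightarrow> \<iota> (x \<otimes> y) = \<iota> x * \<iota> y"
    and rep_one: "\<iota> \<one> = 1\<^sub>m d"
begin

lemma iota_ext_mult:
  assumes a: "gr_elem H a" and b: "gr_elem H b"
  shows "iota_ext H d \<iota> (gr_mult H a b) = iota_ext H d \<iota> a * iota_ext H d \<iota> b"
proof (rule eq_matI)
  fix r c
  assume "r < dim_row (iota_ext H d \<iota> a * iota_ext H d \<iota> b)" "c < dim_col (iota_ext H d \<iota> a * iota_ext H d \<iota> b)"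
  then have rc: "r < d" "c < d"
    by (simp_all add: iota_ext_def)
  define A B where "A = gr_supp H a" and "B = gr_supp H b"
  define S where "S = (\<lambda>(k, h). k \<otimes> h) ` (A \<times> B)"
  have A: "finite A" "A \<subseteq> carrier H" and B: "finite B" "B \<subseteq> carrier H"
    using a b by (auto simp: A_def B_def gr_elem_def gr_supp_def)
  then have S: "finite S" "S \<subseteq> carrier H"
    by (auto simp: S_def)
  have "iota_ext H d \<iota> (gr_mult H a b) $$ (r, c) = (\<Sum>h\<in>S. of_int (gr_mult H a b h) * \<iota> h $$ (r, c))"
    using gr_supp_mult_subset gr_elem_mult[OF a b] S rc
    by (intro index_iota_ext) (simp_all add: S_def A_def B_def)
  also have "\<dots> = (\<Sum>k\<in>A. \<Sum>h\<in>B. of_int (a k) * of_int (b h) * \<iota> (k \<otimes> h) $$ (r, c))"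
    unfolding A_def B_def by (rule sum_gr_mult[OF b S]) (simp add: S_def A_def B_def)
  also have "\<dots> = (\<Sum>k\<in>A. \<Sum>h\<in>B. \<Sum>t<d. of_int (a k) * \<iota> k $$ (r, t) * (of_int (b h) * \<iota> h $$ (t, c)))"
  proof (intro sum.cong refl)
    fix k h
    assume "k \<in> A" "h \<in> B"
    then have "k \<in> carrier H" "h \<in> carrier H"
      using A B by auto
    then show "of_int (a k) * of_int (b h) * \<iota> (k \<otimes> h) $$ (r, c)
        = (\<Sum>t<d. of_int (a k) * \<iota> k $$ (r, t) * (of_int (b h) * \<iota> h $$ (t, c)))"
      by (simp add: rep_mult index_mult_mat_sum[OF rep_carrier rep_carrier rc] sum_distrib_left mult_ac)
  qed
  also have "\<dots> = (\<Sum>t<d. (\<Sum>k\<in>A. of_int (a k) * \<iota> k $$ (r, t)) * (\<Sum>h\<in>B. of_int (b h) * \<iota> h $$ (t, c)))"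
    by (simp only: sum_product sum.swap[of _ "{..<d}"])
  also have "\<dots> = (iota_ext H d \<iota> a * iota_ext H d \<iota> b) $$ (r, c)"
    unfolding index_mult_mat_sum[OF iota_ext_carrier iota_ext_carrier rc]
    using rc by (intro sum.cong refl) (simp add: iota_ext_def A_def B_def)
  finally show "iota_ext H d \<iota> (gr_mult H a b) $$ (r, c) = (iota_ext H d \<iota> a * iota_ext H d \<iota> b) $$ (r, c)" .
qed (simp_all add: iota_ext_def)

lemma iota_block_mult:
  assumes A: "\<And>i j. i < N \<Longrightarrow> j < N \<Longrightarrow> gr_elem H (A i j)"
    and B: "\<And>i j. i < N \<Longrightarrow> j < N \<Longrightarrow> gr_elem H (B i j)"
  shows "iota_block H N d \<iota> (gr_mat_mult H N A B) = iota_block H N d \<iota> A * iota_block H N d \<iota> B"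
proof (rule eq_matI)
  fix r c
  assume "r < dim_row (iota_block H N d \<iota> A * iota_block H N d \<iota> B)"
    "c < dim_col (iota_block H N d \<iota> A * iota_block H N d \<iota> B)"
  then have r: "r < N * d" and c: "c < N * d"
    by (simp_all add: iota_block_def)
  then have "0 < d"
    by (cases d) auto
  define i j r' c' where "i = r div d" and "j = c div d" and "r' = r mod d" and "c' = c mod d"
  have ij: "i < N" "j < N" and rc': "r' < d" "c' < d"
    using r c \<open>0 < d\<close> by (simp_all add: i_def j_def r'_def c'_def less_mult_imp_div_less)
  have "iota_block H N d \<iota> (gr_mat_mult H N A B) $$ (r, c)
      = iota_ext H d \<iota> (\<lambda>h. \<Sum>k<N. gr_mult H (A i k) (B k j) h) $$ (r', c')"
    using r c ij by (simp add: iota_block_def gr_mat_mult_def i_def j_def r'_def c'_def)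
  also have "\<dots> = (\<Sum>k<N. iota_ext H d \<iota> (gr_mult H (A i k) (B k j)) $$ (r', c'))"
    by (rule index_iota_ext_sum[OF _ _ rc']) (use ij A B in \<open>auto intro: gr_elem_mult\<close>)
  also have "\<dots> = (\<Sum>k<N. (iota_ext H d \<iota> (A i k) * iota_ext H d \<iota> (B k j)) $$ (r', c'))"
    using ij A B by (simp add: iota_ext_mult)
  also have "\<dots> = (\<Sum>k<N. \<Sum>t<d. iota_ext H d \<iota> (A i k) $$ (r', t) * iota_ext H d \<iota> (B k j) $$ (t, c'))"
    by (simp add: index_mult_mat_sum[OF iota_ext_carrier iota_ext_carrier rc'])
  also have "\<dots> = (\<Sum>s<N * d. iota_block H N d \<iota> A $$ (r, s) * iota_block H N d \<iota> B $$ (s, c))"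
    unfolding sum_lessThan_mult_div_mod[symmetric]
    using r c by (intro sum.cong refl) (simp add: iota_block_def i_def j_def r'_def c'_def)
  also have "\<dots> = (iota_block H N d \<iota> A * iota_block H N d \<iota> B) $$ (r, c)"
    by (rule index_mult_mat_sum[symmetric]) (use r c in \<open>simp_all add: iota_block_def\<close>)
  finally show "iota_block H N d \<iota> (gr_mat_mult H N A B) $$ (r, c)
      = (iota_block H N d \<iota> A * iota_block H N d \<iota> B) $$ (r, c)" .
qed (simp_all add: iota_block_def)

lemma iota_block_one: "iota_block H N d \<iota> (gr_mat_one H N) = 1\<^sub>m (N * d)"
proof (rule eq_matI)
  fix r c
  assume "r < dim_row (1\<^sub>m (N * d))" "c < dim_col (1\<^sub>m (N * d))"
  then have r: "r < N * d" and c: "c < N * d"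
    by simp_all
  then have "0 < d"
    by (cases d) auto
  have "r = c \<longleftrightarrow> r div d = c div d \<and> r mod d = c mod d"
    by (metis div_mult_mod_eq)
  then show "iota_block H N d \<iota> (gr_mat_one H N) $$ (r, c) = 1\<^sub>m (N * d) $$ (r, c)"
    using r c \<open>0 < d\<close>
    by (auto simp: iota_block_def gr_mat_one_def iota_ext_delta rep_carrier rep_one iota_ext_zero
        less_mult_imp_div_less)
qed (simp_all add: iota_block_def)

lemma iota_ext_eq_rep_inv:
  assumes a: "gr_elem H a" and x: "x \<in> carrier H"
    and one: "iota_ext H d \<iota> (gr_mult H a (gr_delta H x)) = 1\<^sub>m d"
  shows "iota_ext H d \<iota> a = \<iota> (inv x)"
proof -
  have ax: "iota_ext H d \<iota> a * \<iota> x = 1\<^sub>m d"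
    using one x by (simp add: iota_ext_mult[OF a gr_elem_delta[OF x]] iota_ext_delta rep_carrier)
  have "iota_ext H d \<iota> a = iota_ext H d \<iota> a * (\<iota> x * \<iota> (inv x))"
    using x by (simp flip: rep_mult add: rep_one right_mult_one_mat[OF iota_ext_carrier])
  also have "\<dots> = (iota_ext H d \<iota> a * \<iota> x) * \<iota> (inv x)"
    using x by (simp add: assoc_mult_mat[OF iota_ext_carrier rep_carrier rep_carrier])
  also have "\<dots> = \<iota> (inv x)"
    using x ax by (simp add: left_mult_one_mat[OF rep_carrier])
  finally show ?thesis .
qed

end

locale twisted_rep_base = GGr: group GGr + G: group G
  for GGr :: "('g, 'c) monoid_scheme" and G :: "('a, 'b) monoid_scheme" +
  fixes phi :: "'g \<Rightarrow> 'a \<Rightarrow> 'a" and N d :: nat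
    and Mat :: "'g \<Rightarrow> ('a \<times> ('a \<Rightarrow> 'a)) grmat" and \<iota> :: "'a \<times> ('a \<Rightarrow> 'a) \<Rightarrow> complex mat"
  assumes phi_hom: "phi \<in> hom GGr (AutoGroup G)"
begin

abbreviation "H \<equiv> sdprod G (phi ` carrier GGr)"
abbreviation "ZG \<equiv> {a. gr_elem H a \<and> gr_supp H a \<subseteq> carrier G \<times> {\<one>\<^bsub>AutoGroup G\<^esub>}}"
abbreviation "rhoG \<equiv> rhoGt G H N phi Mat"
abbreviation "rhoV f \<equiv> iota_block H N d \<iota> (rhoG f)"
abbreviation "iota_separates_MG \<equiv> \<forall>m\<in>phi ` carrier GGr. m \<noteq> \<one>\<^bsub>AutoGroup G\<^esub> \<longrightarrow>
  (\<forall>a\<in>ZG. iota_ext H d \<iota> (gr_delta H (\<one>\<^bsub>G\<^esub>, m)) \<noteq> iota_ext H d \<iota> a)"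

lemma MG_subgroup: "subgroup (phi ` carrier GGr) (AutoGroup G)"
  using phi_hom G.AutoGroup
  by (intro group_hom.img_is_subgroup) (simp add: group_hom_def group_hom_axioms_def GGr.is_group)

lemma group_H: "group H"
  by (rule G.sdprod_group[OF MG_subgroup])

lemma rhoG_entry:
  "i < N \<Longrightarrow> j < N \<Longrightarrow> rhoG f i j = gr_mult H (Mat f i j) (gr_delta H (\<one>\<^bsub>G\<^esub>, phi f))"
  by (simp add: rhoGt_def)

lemma gr_mat_one_ZG: "gr_mat_one H N i j \<in> ZG"
proof -
  interpret H: group H by (rule group_H)
  have "gr_supp H (gr_delta H \<one>\<^bsub>H\<^esub>) \<subseteq> carrier G \<times> {\<one>\<^bsub>AutoGroup G\<^esub>}"
    by (simp add: gr_supp_delta[OF H.one_closed]) (simp add: one_sdprod)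
  then show ?thesis
    using gr_elem_delta[OF H.one_closed] gr_elem_zero
    by (auto simp: gr_mat_one_def gr_supp_def)
qed

end

locale twisted_rep = twisted_rep_base +
  assumes N_pos: "0 < N"
    and Mat_ZG: "f \<in> carrier GGr \<Longrightarrow> i < N \<Longrightarrow> j < N \<Longrightarrow> Mat f i j \<in> ZG"
    and rhoG_mult: "f \<in> carrier GGr \<Longrightarrow> h \<in> carrier GGr \<Longrightarrow>
      rhoG (f \<otimes>\<^bsub>GGr\<^esub> h) = gr_mat_mult H N (rhoG f) (rhoG h)"
    and rhoG_one: "rhoG \<one>\<^bsub>GGr\<^esub> = gr_mat_one H N"
    and iota_carrier: "x \<in> carrier H \<Longrightarrow> \<iota> x \<in> carrier_mat d d"
    and iota_mult: "x \<in> carrier H \<Longrightarrow> y \<in> carrier H \<Longrightarrow> \<iota> (x \<otimes>\<^bsub>H\<^esub> y) = \<iota> x * \<iota> y"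
    and iota_one: "\<iota> \<one>\<^bsub>H\<^esub> = 1\<^sub>m d"

sublocale twisted_rep \<subseteq> V: mat_rep H d \<iota>
  by (intro mat_rep.intro mat_rep_axioms.intro group_H iota_carrier iota_mult iota_one)

context twisted_rep
begin

lemma gr_elem_rhoG: "f \<in> carrier GGr \<Longrightarrow> i < N \<Longrightarrow> j < N \<Longrightarrow> gr_elem H (rhoG f i j)"
  using Mat_ZG by (simp add: rhoG_entry V.gr_elem_mult gr_elem_delta carrier_sdprod)

lemma rhoV_carrier: "rhoV f \<in> carrier_mat (N * d) (N * d)"
  by (simp add: iota_block_def)

lemma rhoV_mult: "f \<in> carrier GGr \<Longrightarrow> h \<in> carrier GGr \<Longrightarrow> rhoV (f \<otimes>\<^bsub>GGr\<^esub> h) = rhoV f * rhoV h"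
  by (simp add: rhoG_mult V.iota_block_mult gr_elem_rhoG)

lemma rhoV_one: "rhoV \<one>\<^bsub>GGr\<^esub> = 1\<^sub>m (N * d)"
  by (simp add: rhoG_one V.iota_block_one)

lemma rhoV_invertible: "f \<in> carrier GGr \<Longrightarrow> invertible_mat (rhoV f)"
  by (rule invertible_matI[OF rhoV_carrier rhoV_carrier, of _ "inv\<^bsub>GGr\<^esub> f"])
    (simp_all flip: rhoV_mult add: rhoV_one)

lemma subgroup_rhoV_kernel: "subgroup {f \<in> carrier GGr. rhoV f = 1\<^sub>m (N * d)} GGr"
proof (rule GGr.subgroupI)
  fix f
  assume f: "f \<in> {f \<in> carrier GGr. rhoV f = 1\<^sub>m (N * d)}"
  then have "rhoV (inv\<^bsub>GGr\<^esub> f) = rhoV f * rhoV (inv\<^bsub>GGr\<^esub> f)"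
    by (simp add: left_mult_one_mat[OF rhoV_carrier])
  also have "\<dots> = rhoV (f \<otimes>\<^bsub>GGr\<^esub> inv\<^bsub>GGr\<^esub> f)"
    using f by (intro rhoV_mult[symmetric]) simp_all
  finally show "inv\<^bsub>GGr\<^esub> f \<in> {f \<in> carrier GGr. rhoV f = 1\<^sub>m (N * d)}"
    using f by (simp add: rhoV_one)
qed (auto simp: rhoV_one rhoV_mult)

lemma phi_eq_one_if_rhoV_eq_one:
  assumes sep: "iota_separates_MG"
    and f: "f \<in> carrier GGr" "rhoV f = 1\<^sub>m (N * d)"
  shows "phi f = \<one>\<^bsub>AutoGroup G\<^esub>"
proof -
  interpret Aut: group "AutoGroup G" by (rule G.AutoGroup)
  define m where "m = inv\<^bsub>AutoGroup G\<^esub> phi f"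
  have m: "m \<in> phi ` carrier GGr"
    unfolding m_def using f(1) by (intro subgroup.m_inv_closed[OF MG_subgroup]) simp
  have x: "(\<one>\<^bsub>G\<^esub>, phi f) \<in> carrier H"
    using f(1) by (simp add: carrier_sdprod)
  have "iota_ext H d \<iota> (rhoG f 0 0) = iota_ext H d \<iota> (gr_mat_one H N 0 0)"
    using f(2) N_pos by (intro iota_block_eqD[where ?B = "gr_mat_one H N"]) (simp_all add: V.iota_block_one)
  then have "iota_ext H d \<iota> (gr_mult H (Mat f 0 0) (gr_delta H (\<one>\<^bsub>G\<^esub>, phi f))) = 1\<^sub>m d"
    using N_pos by (simp add: rhoG_entry gr_mat_one_def iota_ext_delta iota_carrier V.one_closed iota_one)
  then have "iota_ext H d \<iota> (Mat f 0 0) = \<iota> (\<one>\<^bsub>G\<^esub>, m)"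
    using Mat_ZG[OF f(1) N_pos N_pos] x f(1)
    by (simp add: V.iota_ext_eq_rep_inv G.sdprod_inv_aut[OF MG_subgroup] m_def)
  then have "iota_ext H d \<iota> (gr_delta H (\<one>\<^bsub>G\<^esub>, m)) = iota_ext H d \<iota> (Mat f 0 0)"
    using m by (simp add: iota_ext_delta iota_carrier carrier_sdprod)
  then have "m = \<one>\<^bsub>AutoGroup G\<^esub>"
    using sep m Mat_ZG[OF f(1) N_pos N_pos] by blast
  then show ?thesis
    using f(1) phi_hom by (simp add: m_def hom_in_carrier)
qed

lemma rhoG_eq_Mat:
  "f \<in> carrier GGr \<Longrightarrow> phi f = \<one>\<^bsub>AutoGroup G\<^esub> \<Longrightarrow> i < N \<Longrightarrow> j < N \<Longrightarrow> rhoG f i j = Mat f i j"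
  using Mat_ZG
  by (simp add: rhoG_entry one_sdprod[of G "phi ` carrier GGr", symmetric] V.gr_mult_delta_one)

lemma rhoV_kernel_eq_rhoG_kernel:
  assumes sep: "iota_separates_MG"
    and inj: "inj_on (iota_ext H d \<iota>) ZG"
  shows "{f \<in> carrier GGr. rhoV f = 1\<^sub>m (N * d)} = {f \<in> carrier GGr. rhoG f = gr_mat_one H N}"
proof (intro Collect_cong conj_cong refl iffI)
  fix f
  assume f: "f \<in> carrier GGr" and "rhoV f = 1\<^sub>m (N * d)"
  then have blocks: "iota_ext H d \<iota> (rhoG f i j) = iota_ext H d \<iota> (gr_mat_one H N i j)" if "i < N" "j < N" for i j
    using that by (intro iota_block_eqD[where ?B = "gr_mat_one H N"]) (simp_all add: V.iota_block_one)
  have "phi f = \<one>\<^bsub>AutoGroup G\<^esub>"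
    by (rule phi_eq_one_if_rhoV_eq_one[OF sep f \<open>rhoV f = _\<close>])
  then have entries: "rhoG f i j = gr_mat_one H N i j" if "i < N" "j < N" for i j
    using blocks[OF that] inj_onD[OF inj] Mat_ZG[OF f that] gr_mat_one_ZG
    by (simp add: rhoG_eq_Mat f that)
  then show "rhoG f = gr_mat_one H N"
  proof (intro ext)
    fix i j h
    show "rhoG f i j h = gr_mat_one H N i j h"
    proof (cases "i < N \<and> j < N")
      case True
      then show ?thesis
        by (simp add: entries)
    qed (auto simp: rhoGt_def gr_mat_one_def)
  qed
qed (simp add: V.iota_block_one)

end

theorem mainTheorem2:
  fixes GGr :: "('g, 'c) monoid_scheme"
    and G :: "('a, 'b) monoid_scheme"
    and phi :: "'g \<Rightarrow> 'a \<Rightarrow> 'a"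
    and N d :: nat
    and Mat :: "'g \<Rightarrow> ('a \<times> ('a \<Rightarrow> 'a)) grmat"
    and \<iota> :: "'a \<times> ('a \<Rightarrow> 'a) \<Rightarrow> complex mat"
  defines "MG \<equiv> phi ` carrier GGr"
    and "KG \<equiv> Coset.kernel GGr (AutoGroup G) phi"
    and "H \<equiv> sdprod G (phi ` carrier GGr)"
    and "ZG \<equiv> {a. gr_elem (sdprod G (phi ` carrier GGr)) a \<and> gr_supp (sdprod G (phi ` carrier GGr)) a \<subseteq> carrier G \<times> {\<one>\<^bsub>AutoGroup G\<^esub>}}"
    and "rhoG \<equiv> rhoGt G (sdprod G (phi ` carrier GGr)) N phi Mat"
    and "rhoV \<equiv> (\<lambda>f. iota_block (sdprod G (phi ` carrier GGr)) N d \<iota> (rhoGt G (sdprod G (phi ` carrier GGr)) N phi Mat f))"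
  assumes Npos: "0 < N"
    and grpGG: "group GGr"
    and grpG: "group G"
    and phi_hom: "phi \<in> hom GGr (AutoGroup G)"
    and Mat_ZG: "\<And>f i j. f \<in> carrier GGr \<Longrightarrow> i < N \<Longrightarrow> j < N \<Longrightarrow> Mat f i j \<in> ZG"
    and rhoG_mult: "\<And>f h. f \<in> carrier GGr \<Longrightarrow> h \<in> carrier GGr \<Longrightarrow>
          rhoG (f \<otimes>\<^bsub>GGr\<^esub> h) = gr_mat_mult H N (rhoG f) (rhoG h)"
    and rhoG_one: "rhoG \<one>\<^bsub>GGr\<^esub> = gr_mat_one H N"
    and iota_carrier: "\<And>x. x \<in> carrier H \<Longrightarrow> \<iota> x \<in> carrier_mat d d"
    and iota_mult: "\<And>x y. x \<in> carrier H \<Longrightarrow> y \<in> carrier H \<Longrightarrow> \<iota> (x \<otimes>\<^bsub>H\<^esub> y) = \<iota> x * \<iota> y"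
    and iota_one: "\<iota> \<one>\<^bsub>H\<^esub> = 1\<^sub>m d"
  shows
    "(\<forall>f\<in>carrier GGr. rhoV f \<in> carrier_mat (N * d) (N * d) \<and> invertible_mat (rhoV f))
     \<and> (\<forall>f\<in>carrier GGr. \<forall>h\<in>carrier GGr. rhoV (f \<otimes>\<^bsub>GGr\<^esub> h) = rhoV f * rhoV h)
     \<and> rhoV \<one>\<^bsub>GGr\<^esub> = 1\<^sub>m (N * d)
     \<and> ((\<forall>m\<in>MG. m \<noteq> \<one>\<^bsub>AutoGroup G\<^esub> \<longrightarrow>
            (\<forall>a\<in>ZG. iota_ext H d \<iota> (gr_delta H (\<one>\<^bsub>G\<^esub>, m)) \<noteq> iota_ext H d \<iota> a))
        \<longrightarrow> subgroup {f \<in> carrier GGr. rhoV f = 1\<^sub>m (N * d)} GGr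
            \<and> {f \<in> carrier GGr. rhoV f = 1\<^sub>m (N * d)} \<subseteq> KG
            \<and> (inj_on (iota_ext H d \<iota>) ZG \<longrightarrow>
                 {f \<in> carrier GGr. rhoV f = 1\<^sub>m (N * d)} = {f \<in> carrier GGr. rhoG f = gr_mat_one H N}))"
proof -
  interpret twisted_rep GGr G phi N d Mat \<iota>
    using grpGG grpG phi_hom Npos Mat_ZG rhoG_mult rhoG_one iota_carrier iota_mult iota_one
    unfolding H_def ZG_def rhoG_def
    by (intro twisted_rep.intro twisted_rep_base.intro twisted_rep_axioms.intro twisted_rep_base_axioms.intro)
  show ?thesis
    unfolding MG_def KG_def H_def ZG_def rhoG_def rhoV_def kernel_def
    using rhoV_carrier rhoV_invertible rhoV_mult rhoV_one subgroup_rhoV_kernel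
      phi_eq_one_if_rhoV_eq_one rhoV_kernel_eq_rhoG_kernel
    by blast
qed

end
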